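(* Let $G$ be a simple graph with $n$ vertices and let $F$ be obtained from $G$ by a symmetric $\mathcal K_{xy}$-operation. Then $t(G)\ge t(F)$, $t(K_n-E(G))\ge t(K_n-E(F))$, and moreover $P(\lambda,K_n-E(G))\ge P(\lambda,K_n-E(F))$ for every real $\lambda\ge n$.
   Context: All graphs are finite, undirected, without loops. $t(H)$ denotes the number of spanning trees of $H$; $K_n-E(G)$ is the complement of $G$ in the complete graph $K_n$ on $V(G)$. For a graph $H$ on $n$ vertices let $L(H)=D(H)-A(H)$ be its Laplacian matrix and write $\det(\lambda I-L(H))=\lambda P(\lambda,H)$ ($P$ is the Laplacian polynomial). $\mathcal K_{xy}$-operation: let $G$ be a simple graph, $x\ne y$ vertices, $\mathcal K$ an induced subgraph of $G$ containing $x$ and $y$, and $N(v)$ the neighbourhood of $v$. Put $X=N(x)\setminus(V(\mathcal K)\cup N(y))$, $Y=N(y)\setminus(V(\mathcal K)\cup N(x))$, $[x,X]=\{xv:v\in X\}$, $[y,X]=\{yv:v\in X\}$, $[y,Y]=\{yv:v\in Y\}$. The graph $\mathcal K_{xy}(G)=(G-[x,X])\cup[y,X]$ (on the same vertex set) is obtained from $G$ by the $\mathcal K_{xy}$-operation. The operation is called symmetric if the graph $G-([x,X]\cup[y,Y])$ has an automorphism $\alpha$ with $\alpha(x)=y$, $\alpha(y)=x$, $\alpha(V(\mathcal K))=V(\mathcal K)$, and $\alpha(v)=v$ for every $v\in X\cup Y$. *)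

theory Defs
  imports "HOL-Analysis.Analysis" "HOL-Computational_Algebra.Polynomial"
begin

text \<open>A graph on the (finite) vertex type 'a is given by an adjacency relation.
  The vertex set is UNIV, so n = CARD('a).\<close>

definition simple_graph :: "('a \<Rightarrow> 'a \<Rightarrow> bool) \<Rightarrow> bool" where
  "simple_graph E \<longleftrightarrow> (\<forall>u v. E u v \<longrightarrow> E v u) \<and> (\<forall>v. \<not> E v v)"

definition nbhd :: "('a \<Rightarrow> 'a \<Rightarrow> bool) \<Rightarrow> 'a \<Rightarrow> 'a set" where
  "nbhd E v = {u. E v u}"

definition edges :: "('a \<Rightarrow> 'a \<Rightarrow> bool) \<Rightarrow> 'a set set" where
  "edges E = {{u, v} | u v. E u v}"

definition compl_graph :: "('a \<Rightarrow> 'a \<Rightarrow> bool) \<Rightarrow> 'a \<Rightarrow> 'a \<Rightarrow> bool" where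
  "compl_graph E u v \<longleftrightarrow> u \<noteq> v \<and> \<not> E u v"

definition edge_rel :: "'a set set \<Rightarrow> 'a \<Rightarrow> 'a \<Rightarrow> bool" where
  "edge_rel T a b \<longleftrightarrow> {a, b} \<in> T \<and> a \<noteq> b"

definition connected_es :: "'a set set \<Rightarrow> bool" where
  "connected_es T \<longleftrightarrow> (\<forall>u v. (edge_rel T)\<^sup>*\<^sup>* u v)"

text \<open>Acyclic: no edge lies on a cycle, i.e. the endpoints of every edge are not
  joined by a path avoiding that edge.\<close>
definition acyclic_es :: "'a set set \<Rightarrow> bool" where
  "acyclic_es T \<longleftrightarrow> (\<forall>e\<in>T. \<forall>a b. e = {a, b} \<longrightarrow> \<not> (edge_rel (T - {e}))\<^sup>*\<^sup>* a b)"

definition spanning_trees :: "('a \<Rightarrow> 'a \<Rightarrow> bool) \<Rightarrow> 'a set set set" where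
  "spanning_trees E = {T. T \<subseteq> edges E \<and> connected_es T \<and> acyclic_es T}"

definition num_spanning_trees :: "('a::finite \<Rightarrow> 'a \<Rightarrow> bool) \<Rightarrow> nat" where
  "num_spanning_trees E = card (spanning_trees E)"

definition degree :: "('a::finite \<Rightarrow> 'a \<Rightarrow> bool) \<Rightarrow> 'a \<Rightarrow> nat" where
  "degree E v = card (nbhd E v)"

definition laplacian :: "('a::finite \<Rightarrow> 'a \<Rightarrow> bool) \<Rightarrow> real^'a^'a" where
  "laplacian E = (\<chi> i j. (if i = j then real (degree E i) else 0) - (if E i j then 1 else 0))"

definition lap_charpoly :: "('a::finite \<Rightarrow> 'a \<Rightarrow> bool) \<Rightarrow> real poly" where
  "lap_charpoly E = det (\<chi> i j. (if i = j then [:0, 1:] else 0) - [: laplacian E $ i $ j :])"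

text \<open>Laplacian polynomial P: det(\<lambda> I - L(H)) = \<lambda> P(\<lambda>, H).\<close>
definition lap_poly :: "('a::finite \<Rightarrow> 'a \<Rightarrow> bool) \<Rightarrow> real poly" where
  "lap_poly E = lap_charpoly E div [:0, 1:]"

text \<open>The K_xy-operation; the induced subgraph K is given by its vertex set.\<close>
definition Xset :: "('a \<Rightarrow> 'a \<Rightarrow> bool) \<Rightarrow> 'a set \<Rightarrow> 'a \<Rightarrow> 'a \<Rightarrow> 'a set" where
  "Xset E K x y = nbhd E x - (K \<union> nbhd E y)"

definition Kxy_op :: "('a \<Rightarrow> 'a \<Rightarrow> bool) \<Rightarrow> 'a set \<Rightarrow> 'a \<Rightarrow> 'a \<Rightarrow> 'a \<Rightarrow> 'a \<Rightarrow> bool" where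
  "Kxy_op E K x y u v \<longleftrightarrow>
     (E u v \<and> \<not> (\<exists>w\<in>Xset E K x y. {u, v} = {x, w}))
     \<or> (\<exists>w\<in>Xset E K x y. {u, v} = {y, w})"

definition remove_xXyY :: "('a \<Rightarrow> 'a \<Rightarrow> bool) \<Rightarrow> 'a set \<Rightarrow> 'a \<Rightarrow> 'a \<Rightarrow> 'a \<Rightarrow> 'a \<Rightarrow> bool" where
  "remove_xXyY E K x y u v \<longleftrightarrow> E u v \<and>
     \<not> (\<exists>w\<in>Xset E K x y. {u, v} = {x, w}) \<and> \<not> (\<exists>w\<in>Xset E K y x. {u, v} = {y, w})"

definition graph_automorphism :: "('a \<Rightarrow> 'a \<Rightarrow> bool) \<Rightarrow> ('a \<Rightarrow> 'a) \<Rightarrow> bool" where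
  "graph_automorphism E \<alpha> \<longleftrightarrow> bij \<alpha> \<and> (\<forall>u v. E (\<alpha> u) (\<alpha> v) \<longleftrightarrow> E u v)"

definition symmetric_Kxy :: "('a \<Rightarrow> 'a \<Rightarrow> bool) \<Rightarrow> 'a set \<Rightarrow> 'a \<Rightarrow> 'a \<Rightarrow> bool" where
  "symmetric_Kxy E K x y \<longleftrightarrow> (\<exists>\<alpha>. graph_automorphism (remove_xXyY E K x y) \<alpha> \<and>
     \<alpha> x = y \<and> \<alpha> y = x \<and> \<alpha> ` K = K \<and> (\<forall>v \<in> Xset E K x y \<union> Xset E K y x. \<alpha> v = v))"

end

theory Submission
  imports Defs
begin

(*
  Write H for G without the edges from x to X and from y to Y.  Then G is the "split
  graph" H + (x to X) + (y to Y), the result F is the "merged graph" H + (y to X \<union> Y), and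
  the symmetry hypothesis supplies an automorphism alpha of H exchanging x and y and
  fixing X \<union> Y pointwise.

  1. t(F) <= t(G): an explicit injection tree_map from the spanning trees of F into those
     of G.  A tree keeping x and y joined after deleting its y-X star gets that star moved
     over to x; otherwise its y-Y star is moved to x and the result is mirrored by alpha.
     Moving a star is a sequence of edge exchanges, and edge exchanges preserve trees.
  2. The complements of G and F again form a star_pair, with x and y exchanged, so the
     same injection compares the spanning trees of the complements.
  3. For lambda > n the Laplacian polynomial of K_n - E at lambda equals
     det((lambda - n) I + L(E) + J) / lambda.  For E = G, F these matrices are rank-two
     updates d z^T + z d^T, with d = e_y - e_x, of one alpha-invariant positive definite
     matrix N.  The matrix determinant lemma gives det N (1 - (d.N^-1 d)(z.N^-1 z)), and a
     maximum principle for N shows that z.N^-1 z is larger for F.  Continuity of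
     polynomials covers lambda = n.
*)

abbreviation reach :: "'a set set \<Rightarrow> 'a \<Rightarrow> 'a \<Rightarrow> bool" where
  "reach T \<equiv> (edge_rel T)\<^sup>*\<^sup>*"

lemma edge_rel_sym: "edge_rel T a b \<Longrightarrow> edge_rel T b a"
  by (auto simp: edge_rel_def insert_commute)

lemma reach_sym: "reach T a b \<Longrightarrow> reach T b a"
  by (induction rule: rtranclp_induct)
    (auto intro: converse_rtranclp_into_rtranclp edge_rel_sym)

lemma reach_mono:
  assumes "T \<subseteq> T'" "reach T a b"
  shows "reach T' a b"
  using assms(2) by (induction rule: rtranclp_induct)
    (auto intro: rtranclp.rtrancl_into_rtrancl simp: edge_rel_def dest: subsetD[OF assms(1)])

lemma reach_edge: "{a, b} \<in> T \<Longrightarrow> a \<noteq> b \<Longrightarrow> reach T a b"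
  by (auto simp: edge_rel_def)

lemma reach_step_iff: "edge_rel T u v \<Longrightarrow> reach T a u \<longleftrightarrow> reach T a v"
  by (meson edge_rel_sym rtranclp.rtrancl_into_rtrancl)

lemma reach_cut:
  assumes "\<And>u v. edge_rel T u v \<Longrightarrow> u \<in> U \<longleftrightarrow> v \<in> U" and "reach T a b"
  shows "a \<in> U \<longleftrightarrow> b \<in> U"
  using assms(2) by (induction rule: rtranclp_induct) (auto dest: assms(1))

definition proper_es :: "'a set set \<Rightarrow> bool" where
  "proper_es T \<longleftrightarrow> (\<forall>e\<in>T. \<exists>u v. u \<noteq> v \<and> e = {u, v})"

definition tree_es :: "'a set set \<Rightarrow> bool" where
  "tree_es T \<longleftrightarrow> connected_es T \<and> acyclic_es T \<and> proper_es T"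

lemma acyclicD: "acyclic_es T \<Longrightarrow> {a, b} \<in> T \<Longrightarrow> \<not> reach (T - {{a, b}}) a b"
  by (auto simp: acyclic_es_def)

lemma reach_after_delete:
  assumes "connected_es T" "{a, b} \<in> T"
  shows "reach (T - {{a, b}}) a v \<or> reach (T - {{a, b}}) b v"
proof -
  have "reach T a v" using assms(1) by (auto simp: connected_es_def)
  then show ?thesis
  proof (induction rule: rtranclp_induct)
    case (step v w)
    show ?case
    proof (cases "{v, w} = {a, b}")
      case True
      then show ?thesis by (auto simp: doubleton_eq_iff)
    next
      case False
      then have "edge_rel (T - {{a, b}}) v w" using step(2) by (auto simp: edge_rel_def)
      then show ?thesis using step(3) by (auto intro: rtranclp.rtrancl_into_rtrancl)
    qed
  qed simp
qed

section \<open>The edge exchange property of trees\<close>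

lemma exchange_connected:
  assumes con: "connected_es T" and e: "{a, b} \<in> T"
    and rc: "reach (T - {{a, b}}) a c" and rd: "reach (T - {{a, b}}) b d" and cd: "c \<noteq> d"
  shows "connected_es (insert {c, d} (T - {{a, b}}))"
proof -
  define T' where "T' = insert {c, d} (T - {{a, b}})"
  have sub: "T - {{a, b}} \<subseteq> T'" by (auto simp: T'_def)
  have "reach T' a c" "reach T' c d" "reach T' d b"
    using reach_mono[OF sub rc] reach_mono[OF sub reach_sym[OF rd]] cd
    by (auto simp: T'_def intro!: reach_edge)
  then have ab: "reach T' a b" by (meson rtranclp_trans)
  have "reach T' v a" for v
    using reach_after_delete[OF con e, of v] reach_mono[OF sub] reach_sym ab
    by (meson rtranclp_trans)
  then show ?thesis unfolding connected_es_def T'_def[symmetric]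
    using reach_sym by (meson rtranclp_trans)
qed

lemma exchange_acyclic:
  assumes acy: "acyclic_es T" and pr: "proper_es T" and e: "{a, b} \<in> T"
    and rc: "reach (T - {{a, b}}) a c" and rd: "reach (T - {{a, b}}) b d"
  shows "acyclic_es (insert {c, d} (T - {{a, b}}))"
proof -
  define R where "R = T - {{a, b}}"
  define Aset where "Aset = {v. reach R a v}"
  have no_ab: "\<not> reach R a b" using acyclicD[OF acy e] by (simp add: R_def)
  then have no_cd: "\<not> reach R c d"
    using rc reach_sym[OF rd] unfolding R_def by (meson rtranclp_trans)
  have cA: "c \<in> Aset" using rc by (simp add: Aset_def R_def)
  have dA: "d \<notin> Aset"
    using rd no_ab reach_sym[OF rd] unfolding Aset_def R_def by (meson mem_Collect_eq rtranclp_trans)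
  show ?thesis unfolding acyclic_es_def R_def[symmetric]
  proof (intro ballI allI impI notI)
    fix g p q
    assume g: "g \<in> insert {c, d} R" "g = {p, q}" and r: "reach (insert {c, d} R - {g}) p q"
    show False
    proof (cases "g = {c, d}")
      case True
      then have "reach R p q" using r reach_mono[of "insert {c, d} R - {g}" R] by auto
      then show False using True g(2) no_cd reach_sym[of R p q] by (auto simp: doubleton_eq_iff)
    next
      case False
      then have gT: "g \<in> T" "g \<in> R" using g(1) by (auto simp: R_def)
      then have pq: "p \<noteq> q" using pr g(2) by (auto simp: proper_es_def doubleton_eq_iff)
      define U where "U = {v. reach (T - {g}) p v}"
      have qU: "q \<notin> U" using acyclicD[OF acy, of p q] gT g(2) by (simp add: U_def)
      have pA: "p \<in> Aset \<longleftrightarrow> q \<in> Aset"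
        using reach_step_iff[of R p q a] gT g(2) pq by (simp add: Aset_def edge_rel_def)
      txt \<open>A set separating p from q that no edge of the new graph leaves: if the new
        edge {c,d} crosses U, correct U by the side of {a,b} a vertex lies on.\<close>
      define Y where "Y = {v. v \<in> U \<longleftrightarrow> ((c \<in> U \<longleftrightarrow> d \<in> U) \<or> (v \<in> Aset \<longleftrightarrow> c \<in> U))}"
      have "u \<in> Y \<longleftrightarrow> v \<in> Y" if "edge_rel (insert {c, d} R - {g}) u v" for u v
      proof (cases "{u, v} = {c, d}")
        case True
        then show ?thesis using cA dA by (auto simp: Y_def doubleton_eq_iff)
      next
        case False
        then have "edge_rel (T - {g}) u v" "edge_rel R u v"
          using that by (auto simp: edge_rel_def R_def)
        then show ?thesis
          using reach_step_iff[of "T - {g}" u v p] reach_step_iff[of R u v a]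
          by (simp add: Y_def U_def Aset_def)
      qed
      from reach_cut[OF this r] show False using qU pA by (auto simp: Y_def U_def)
    qed
  qed
qed

lemma tree_exchange:
  assumes "tree_es T" "{a, b} \<in> T" "c \<noteq> d"
    and "reach (T - {{a, b}}) a c" "reach (T - {{a, b}}) b d"
  shows "tree_es (insert {c, d} (T - {{a, b}}))"
proof -
  have "proper_es (insert {c, d} (T - {{a, b}}))"
    using assms(1,3) by (auto simp: tree_es_def proper_es_def)
  then show ?thesis
    using assms(1) exchange_connected[OF _ assms(2,4,5,3)] exchange_acyclic[OF _ _ assms(2,4,5)]
    by (simp add: tree_es_def)
qed

definition star_edges :: "'a \<Rightarrow> 'a set \<Rightarrow> 'a set set" where
  "star_edges z W = {{z, w} | w. w \<in> W}"

definition move_star :: "'a set set \<Rightarrow> 'a \<Rightarrow> 'a \<Rightarrow> 'a set \<Rightarrow> 'a set set" where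
  "move_star T z z' W = {e \<in> T. \<not> (\<exists>w\<in>W. e = {z, w})} \<union> {{z', w} | w. w \<in> W \<and> {z, w} \<in> T}"

lemma doubleton_cancel_left: "{z, w} = {z, v} \<longleftrightarrow> w = v"
  by (metis doubleton_eq_iff)

lemma doubleton_ne: "z \<noteq> z' \<Longrightarrow> w \<noteq> z \<Longrightarrow> {z', w} \<noteq> {z, v}"
  by (metis insertI1 insert_commute insert_iff singletonD)

lemma move_star_insert_in:
  assumes "z \<noteq> z'" "w \<noteq> z" "\<forall>v\<in>W. v \<noteq> z" "w \<notin> W" "{z, w} \<in> T"
  shows "move_star T z z' (insert w W) = insert {z', w} (move_star T z z' W - {{z, w}})"
proof -
  have "\<And>v. v \<in> insert w W \<Longrightarrow> {z', v} \<noteq> {z, w}" using assms(1-3) doubleton_ne by blast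
  moreover have "\<And>v. v \<in> W \<Longrightarrow> {z, v} \<noteq> {z, w}" using assms(4) doubleton_cancel_left by metis
  ultimately show ?thesis
    using assms(5) unfolding move_star_def by (auto simp: doubleton_cancel_left)
qed

lemma move_star_insert_notin:
  "{z, w} \<notin> T \<Longrightarrow> move_star T z z' (insert w W) = move_star T z z' W"
  unfolding move_star_def by (auto simp: doubleton_eq_iff)

lemma move_star_keeps: "T - star_edges z W \<subseteq> move_star T z z' W"
  by (auto simp: move_star_def star_edges_def)

text \<open>Moving the star of z over to z' keeps a tree a tree, provided z' is joined to
  z without using the star: each single move is an edge exchange.\<close>
lemma move_star_tree:
  assumes "finite W" "tree_es T" "z \<noteq> z'" "\<forall>w\<in>W. w \<noteq> z \<and> w \<noteq> z'"
    and "reach (T - star_edges z W) z' z"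
  shows "tree_es (move_star T z z' W)"
  using assms(1,4,5)
proof (induction W rule: finite_induct)
  case empty
  then show ?case using assms(2) by (simp add: move_star_def)
next
  case (insert w W)
  let ?T = "move_star T z z' W"
  have "T - star_edges z (insert w W) \<subseteq> T - star_edges z W" by (auto simp: star_edges_def)
  then have IH: "tree_es ?T"
    using insert.IH[OF _ reach_mono[OF _ insert(5)]] insert(4) by simp
  show ?case
  proof (cases "{z, w} \<in> T")
    case True
    have "\<forall>v\<in>W. {z, w} \<noteq> {z, v}" using insert(2) doubleton_cancel_left by metis
    then have in_T: "{z, w} \<in> ?T" using True by (auto simp: move_star_def)
    have "T - star_edges z (insert w W) \<subseteq> ?T - {{z, w}}"
      using move_star_keeps[of T z W z'] by (auto simp: star_edges_def)
    then have r: "reach (?T - {{z, w}}) z z'" using reach_sym[OF insert(5)] by (rule reach_mono)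
    have "z' \<noteq> w" using insert(4) by auto
    from tree_exchange[OF IH in_T this r rtranclp.rtrancl_refl] show ?thesis
      using True insert(2,4) assms(3) by (simp add: move_star_insert_in)
  next
    case False
    then show ?thesis using IH by (simp add: move_star_insert_notin)
  qed
qed

lemma move_star_inverse:
  assumes "z \<noteq> z'" "\<forall>w\<in>W. w \<noteq> z \<and> w \<noteq> z'" "\<forall>w\<in>W. {z', w} \<notin> T"
  shows "move_star (move_star T z z' W) z' z W = T"
  using assms doubleton_ne[OF assms(1)] doubleton_ne[OF assms(1)[symmetric]]
  unfolding move_star_def by (auto simp: doubleton_cancel_left)

definition edge_image :: "('a \<Rightarrow> 'b) \<Rightarrow> 'a set set \<Rightarrow> 'b set set" where
  "edge_image f T = (\<lambda>e. f ` e) ` T"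

lemma reach_edge_image:
  assumes "inj f" "reach T u v"
  shows "reach (edge_image f T) (f u) (f v)"
  using assms(2)
proof (induction rule: rtranclp_induct)
  case (step v w)
  have "f ` {v, w} \<in> edge_image f T" "f v \<noteq> f w"
    using step(2) assms(1) unfolding edge_rel_def edge_image_def by (blast, simp add: inj_eq)
  then have "edge_rel (edge_image f T) (f v) (f w)" by (simp add: edge_rel_def)
  then show ?case using step(3) by (auto intro: rtranclp.rtrancl_into_rtrancl)
qed simp

lemma inj_edge_image: "inj f \<Longrightarrow> inj (edge_image f)"
  unfolding edge_image_def by (meson inj_image_eq_iff injI)

lemma edge_image_inv: "bij f \<Longrightarrow> edge_image (inv f) (edge_image f T) = T"
  by (simp add: edge_image_def image_image bij_is_inj image_inv_f_f)

lemma edge_image_Diff: "inj f \<Longrightarrow> edge_image f (T - {e}) = edge_image f T - {f ` e}"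
  unfolding edge_image_def by (auto simp: inj_image_eq_iff)

lemma tree_edge_image:
  assumes "bij f" "tree_es T"
  shows "tree_es (edge_image f T)"
proof -
  have inj: "inj f" and inj_inv: "inj (inv f)" and f_inv: "\<And>a. f (inv f a) = a"
    using assms(1) by (auto simp: bij_is_inj bij_imp_bij_inv bij_is_surj surj_f_inv_f)
  have "connected_es (edge_image f T)" unfolding connected_es_def
  proof (intro allI)
    fix a b
    have "reach T (inv f a) (inv f b)" using assms(2) by (simp add: tree_es_def connected_es_def)
    from reach_edge_image[OF inj this] show "reach (edge_image f T) a b" by (simp add: f_inv)
  qed
  moreover have "proper_es (edge_image f T)" unfolding proper_es_def
  proof
    fix e' assume "e' \<in> edge_image f T"
    then obtain e where e: "e \<in> T" "e' = f ` e" by (auto simp: edge_image_def)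
    then obtain u v where "u \<noteq> v" "e = {u, v}" using assms(2) by (auto simp: tree_es_def proper_es_def)
    then have "f u \<noteq> f v" "e' = {f u, f v}" using e(2) inj by (auto simp: inj_eq)
    then show "\<exists>u v. u \<noteq> v \<and> e' = {u, v}" by blast
  qed
  moreover have "acyclic_es (edge_image f T)" unfolding acyclic_es_def
  proof (intro ballI allI impI notI)
    fix e' a b assume e': "e' \<in> edge_image f T" "e' = {a, b}"
      and r: "reach (edge_image f T - {e'}) a b"
    obtain e where e: "e \<in> T" "e' = f ` e" using e'(1) by (auto simp: edge_image_def)
    have "e = inv f ` e'" using e(2) inj by (simp add: image_inv_f_f)
    then have ee: "e = {inv f a, inv f b}" using e'(2) by simp
    have "reach (edge_image (inv f) (edge_image f (T - {e}))) (inv f a) (inv f b)"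
      using reach_edge_image[OF inj_inv r] by (simp add: edge_image_Diff[OF inj] e(2))
    then show False
      using acyclicD[of T "inv f a" "inv f b"] assms e(1) ee by (simp add: edge_image_inv tree_es_def)
  qed
  ultimately show ?thesis by (simp add: tree_es_def)
qed

definition add_star :: "('a \<Rightarrow> 'a \<Rightarrow> bool) \<Rightarrow> 'a \<Rightarrow> 'a set \<Rightarrow> 'a \<Rightarrow> 'a \<Rightarrow> bool" where
  "add_star H z W u v \<longleftrightarrow> H u v \<or> (u = z \<and> v \<in> W) \<or> (v = z \<and> u \<in> W)"

lemma add_star_commute: "add_star (add_star H a S) b S' = add_star (add_star H b S') a S"
  by (auto simp: add_star_def fun_eq_iff)

lemma move_star_edges:
  assumes "T \<subseteq> edges (add_star H z (W \<union> W'))"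
  shows "move_star T z z' W \<subseteq> edges (add_star (add_star H z W') z' W)"
proof
  fix e assume e: "e \<in> move_star T z z' W"
  show "e \<in> edges (add_star (add_star H z W') z' W)"
  proof (cases "e \<in> T \<and> \<not> (\<exists>w\<in>W. e = {z, w})")
    case True
    then obtain u v where "e = {u, v}" "add_star H z (W \<union> W') u v"
      using assms by (auto simp: edges_def)
    then show ?thesis using True unfolding edges_def add_star_def by (auto simp: insert_commute)
  next
    case False
    then show ?thesis using e unfolding move_star_def edges_def add_star_def by auto
  qed
qed

lemma finite_spanning_trees: "finite (spanning_trees (E :: 'a::finite \<Rightarrow> 'a \<Rightarrow> bool))"
  by (rule finite_subset[of _ "Pow (Pow UNIV)"]) auto

lemma spanning_trees_iff: "T \<in> spanning_trees E \<longleftrightarrow> T \<subseteq> edges E \<and> connected_es T \<and> acyclic_es T"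
  by (simp add: spanning_trees_def)

locale star_pair =
  fixes H :: "'a::finite \<Rightarrow> 'a \<Rightarrow> bool" and \<alpha> :: "'a \<Rightarrow> 'a" and x y :: 'a and A B :: "'a set"
  assumes H_sym: "\<And>u v. H u v \<Longrightarrow> H v u" and H_irrefl: "\<And>v. \<not> H v v"
    and \<alpha>_bij: "bij \<alpha>" and \<alpha>_aut: "\<And>u v. H (\<alpha> u) (\<alpha> v) \<longleftrightarrow> H u v"
    and \<alpha>_x: "\<alpha> x = y" and \<alpha>_y: "\<alpha> y = x" and x_ne_y: "x \<noteq> y"
    and A_B_disjoint: "A \<inter> B = {}" and x_notin: "x \<notin> A \<union> B" and y_notin: "y \<notin> A \<union> B"
    and \<alpha>_fix: "\<And>w. w \<in> A \<union> B \<Longrightarrow> \<alpha> w = w"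
    and no_H_x: "\<And>w. w \<in> A \<union> B \<Longrightarrow> \<not> H x w" and no_H_y: "\<And>w. w \<in> A \<union> B \<Longrightarrow> \<not> H y w"
begin

abbreviation split_graph :: "'a \<Rightarrow> 'a \<Rightarrow> bool" where
  "split_graph \<equiv> add_star (add_star H x A) y B"

abbreviation merged_graph :: "'a \<Rightarrow> 'a \<Rightarrow> bool" where
  "merged_graph \<equiv> add_star H y (A \<union> B)"

lemma \<alpha>_inj: "inj \<alpha>"
  using \<alpha>_bij by (simp add: bij_is_inj)

lemma \<alpha>_eq_x_iff: "\<alpha> i = x \<longleftrightarrow> i = y" and \<alpha>_eq_y_iff: "\<alpha> i = y \<longleftrightarrow> i = x"
  using \<alpha>_x \<alpha>_y \<alpha>_inj by (metis injD)+

lemma \<alpha>_mem_iff: "\<alpha> i \<in> A \<longleftrightarrow> i \<in> A" "\<alpha> i \<in> B \<longleftrightarrow> i \<in> B"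
proof -
  have "\<alpha> i \<in> A \<union> B \<Longrightarrow> \<alpha> i = i" using \<alpha>_fix[of "\<alpha> i"] \<alpha>_inj by (metis injD)
  then show "\<alpha> i \<in> A \<longleftrightarrow> i \<in> A" "\<alpha> i \<in> B \<longleftrightarrow> i \<in> B" using \<alpha>_fix by (metis Un_iff)+
qed

lemma no_H_to_x: "w \<in> A \<union> B \<Longrightarrow> \<not> H w x" and no_H_to_y: "w \<in> A \<union> B \<Longrightarrow> \<not> H w y"
  using no_H_x no_H_y H_sym by blast+

section \<open>Spanning trees: an injection from the merged to the split graph\<close>

lemma merged_tree:
  assumes "T \<in> spanning_trees merged_graph"
  shows "tree_es T" "\<And>w. w \<in> A \<union> B \<Longrightarrow> {x, w} \<notin> T"
proof -
  have sub: "T \<subseteq> edges merged_graph" using assms by (simp add: spanning_trees_iff)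
  have edge: "\<exists>u v. e = {u, v} \<and> (H u v \<or> (u = y \<and> v \<in> A \<union> B))" if "e \<in> T" for e
    using subsetD[OF sub that] unfolding edges_def add_star_def by (auto simp: insert_commute)
  have "proper_es T" unfolding proper_es_def
  proof
    fix e assume "e \<in> T"
    then obtain u v where "e = {u, v}" "H u v \<or> (u = y \<and> v \<in> A \<union> B)" using edge by blast
    moreover have "u \<noteq> v" using calculation(2) H_irrefl y_notin by auto
    ultimately show "\<exists>u v. u \<noteq> v \<and> e = {u, v}" by blast
  qed
  then show "tree_es T" using assms by (simp add: spanning_trees_iff tree_es_def)
  show "{x, w} \<notin> T" if "w \<in> A \<union> B" for w
    using edge[of "{x, w}"] that x_ne_y x_notin no_H_x no_H_to_x by (auto simp: doubleton_eq_iff)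
qed

text \<open>The two cases of the injection: do x and y stay connected once the edges
  from y to A are deleted?\<close>
definition keeps_xy :: "'a set set \<Rightarrow> bool" where
  "keeps_xy T \<longleftrightarrow> reach (T - star_edges y A) x y"

definition tree_map :: "'a set set \<Rightarrow> 'a set set" where
  "tree_map T = (if keeps_xy T then move_star T y x A else edge_image \<alpha> (move_star T y x B))"

text \<open>If deleting the y-A star separates x from y, then the last edge of the
  tree path from x to y is some {w0,y} with w0 \<in> A, and x reaches w0 avoiding y.\<close>
lemma separating_edge:
  assumes T: "T \<in> spanning_trees merged_graph" and nk: "\<not> keeps_xy T"
  shows "\<exists>w0\<in>A. {y, w0} \<in> T \<and> reach (T - star_edges y A - star_edges y B) x w0"
proof -
  define U where "U = {v. reach (T - star_edges y A) x v}"
  have yU: "y \<notin> U" using nk by (simp add: U_def keeps_xy_def)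
  have "reach T x y" using merged_tree(1)[OF T] by (simp add: tree_es_def connected_es_def)
  then obtain u v where uv: "edge_rel T u v" "(u \<in> U) \<noteq> (v \<in> U)"
    using reach_cut[of T U x y] yU by (auto simp: U_def)
  have "{u, v} \<in> star_edges y A"
  proof (rule ccontr)
    assume "{u, v} \<notin> star_edges y A"
    then have "edge_rel (T - star_edges y A) u v" using uv(1) by (auto simp: edge_rel_def)
    then show False using reach_step_iff[of _ u v x] uv(2) by (auto simp: U_def)
  qed
  then obtain w0 where w0: "w0 \<in> A" "{u, v} = {y, w0}" by (auto simp: star_edges_def)
  have "w0 \<in> U" using w0(2) uv(2) yU by (auto simp: doubleton_eq_iff)
  txt \<open>Inside U no vertex is y, so the path to w0 uses no edge at y.\<close>
  have "reach (T - star_edges y A - star_edges y B) x v" if "reach (T - star_edges y A) x v" for v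
    using that
  proof (induction rule: rtranclp_induct)
    case (step v v')
    have "v \<in> U" "v' \<in> U" using step(1,2) by (auto simp: U_def intro: rtranclp.rtrancl_into_rtrancl)
    then have "{v, v'} \<notin> star_edges y B" using yU by (auto simp: star_edges_def doubleton_eq_iff)
    then have "edge_rel (T - star_edges y A - star_edges y B) v v'"
      using step(2) by (auto simp: edge_rel_def)
    then show ?case using step(3) by (auto intro: rtranclp.rtrancl_into_rtrancl)
  qed simp
  then show ?thesis using w0 \<open>w0 \<in> U\<close> uv(1) by (auto simp: U_def edge_rel_def)
qed

text \<open>Consequently x reaches y while avoiding the y-B star, as moving that star requires.\<close>
lemma separating_edge_reach:
  assumes T: "T \<in> spanning_trees merged_graph" and nk: "\<not> keeps_xy T"
  shows "reach (T - star_edges y B) x y"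
proof -
  obtain w0 where w0: "w0 \<in> A" "{y, w0} \<in> T" "reach (T - star_edges y A - star_edges y B) x w0"
    using separating_edge[OF T nk] by blast
  have "{y, w0} \<notin> star_edges y B" using w0(1) A_B_disjoint by (auto simp: star_edges_def doubleton_cancel_left)
  then have "reach (T - star_edges y B) w0 y"
    using w0 y_notin by (intro reach_edge) (auto simp: insert_commute)
  moreover have "reach (T - star_edges y B) x w0" by (rule reach_mono[OF _ w0(3)]) blast
  ultimately show ?thesis by (meson rtranclp_trans)
qed

lemma swapped_edges_image:
  "edge_image \<alpha> (edges (add_star (add_star H y A) x B)) \<subseteq> edges split_graph"
proof
  fix e assume "e \<in> edge_image \<alpha> (edges (add_star (add_star H y A) x B))"
  then obtain u v where uv: "e = {\<alpha> u, \<alpha> v}" "add_star (add_star H y A) x B u v"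
    by (auto simp: edge_image_def edges_def)
  then have "split_graph (\<alpha> u) (\<alpha> v)" unfolding add_star_def using \<alpha>_aut \<alpha>_x \<alpha>_y \<alpha>_fix by auto
  then show "e \<in> edges split_graph" using uv(1) by (auto simp: edges_def)
qed

lemma tree_map_in:
  assumes T: "T \<in> spanning_trees merged_graph"
  shows "tree_map T \<in> spanning_trees split_graph"
proof -
  have sub: "T \<subseteq> edges merged_graph" using T by (simp add: spanning_trees_iff)
  have away: "\<forall>w\<in>A. w \<noteq> y \<and> w \<noteq> x" "\<forall>w\<in>B. w \<noteq> y \<and> w \<noteq> x" using x_notin y_notin by auto
  show ?thesis
  proof (cases "keeps_xy T")
    case True
    have "tree_es (move_star T y x A)"
      using move_star_tree[OF finite merged_tree(1)[OF T] x_ne_y[symmetric] away(1)] True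
      by (simp add: keeps_xy_def)
    moreover have "move_star T y x A \<subseteq> edges split_graph"
      using move_star_edges[OF sub] by (simp add: add_star_commute)
    ultimately show ?thesis using True by (simp add: tree_map_def spanning_trees_iff tree_es_def)
  next
    case False
    have "tree_es (move_star T y x B)"
      using move_star_tree[OF finite merged_tree(1)[OF T] x_ne_y[symmetric] away(2)
          separating_edge_reach[OF T False]] .
    then have "tree_es (edge_image \<alpha> (move_star T y x B))" by (rule tree_edge_image[OF \<alpha>_bij])
    moreover have "move_star T y x B \<subseteq> edges (add_star (add_star H y A) x B)"
      using move_star_edges[of T H y B A x] sub by (simp add: Un_commute)
    then have "edge_image \<alpha> (move_star T y x B) \<subseteq> edges split_graph"
      using swapped_edges_image unfolding edge_image_def by blast
    ultimately show ?thesis using False by (simp add: tree_map_def spanning_trees_iff tree_es_def)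
  qed
qed

text \<open>The two cases are told apart by the image: x and y remain connected in it
  after deleting the star from x to A exactly in the first case.\<close>
lemma tree_map_keeps:
  assumes T: "T \<in> spanning_trees merged_graph" and k: "keeps_xy T"
  shows "reach (move_star T y x A - star_edges x A) x y"
proof -
  have "T - star_edges y A \<subseteq> move_star T y x A - star_edges x A"
    using merged_tree(2)[OF T] by (auto simp: move_star_def star_edges_def)
  then show ?thesis using reach_mono k by (auto simp: keeps_xy_def)
qed

text \<open>In the second case the image has no such path: it would close a cycle through the
  image {x,w0} of the separating edge.\<close>
lemma tree_map_not_keeps:
  assumes T: "T \<in> spanning_trees merged_graph" and nk: "\<not> keeps_xy T"
  shows "\<not> reach (edge_image \<alpha> (move_star T y x B) - star_edges x A) x y"
proof
  define T2 where "T2 = move_star T y x B"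
  define T3 where "T3 = edge_image \<alpha> T2"
  assume "reach (edge_image \<alpha> (move_star T y x B) - star_edges x A) x y"
  then have r: "reach (T3 - star_edges x A) x y" by (simp add: T2_def T3_def)
  obtain w0 where w0: "w0 \<in> A" "{y, w0} \<in> T" "reach (T - star_edges y A - star_edges y B) x w0"
    using separating_edge[OF T nk] by blast
  have \<alpha>_w0: "\<alpha> w0 = w0" using \<alpha>_fix w0(1) by auto
  have "\<not> (\<exists>w\<in>B. {y, w0} = {y, w})" using w0(1) A_B_disjoint by (auto simp: doubleton_cancel_left)
  then have "{y, w0} \<in> T2" using w0(2) by (simp add: T2_def move_star_def)
  then have "\<alpha> ` {y, w0} \<in> T3" unfolding T3_def edge_image_def by (rule imageI)
  then have in3: "{x, w0} \<in> T3" using \<alpha>_y \<alpha>_w0 by simp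
  have "tree_es T2"
    unfolding T2_def using move_star_tree[OF finite merged_tree(1)[OF T] x_ne_y[symmetric] _
        separating_edge_reach[OF T nk]] x_notin y_notin by auto
  then have acy3: "acyclic_es T3" using tree_edge_image[OF \<alpha>_bij] by (simp add: T3_def tree_es_def)
  txt \<open>The path from x to w0 avoiding y is mapped to a path from y to w0 in
    T3 avoiding the x-A star; together with r it closes a cycle through {x,w0}.\<close>
  have "T - star_edges y A - star_edges y B \<subseteq> T2 - star_edges y A"
    using move_star_keeps[of T y B x] by (auto simp: T2_def)
  then have "reach (T2 - star_edges y A) x w0" using w0(3) by (rule reach_mono)
  from reach_edge_image[OF \<alpha>_inj this]
  have r1: "reach (edge_image \<alpha> (T2 - star_edges y A)) y w0" by (simp add: \<alpha>_x \<alpha>_w0)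
  have "edge_image \<alpha> (T2 - star_edges y A) \<subseteq> T3 - star_edges x A"
  proof
    fix e' assume "e' \<in> edge_image \<alpha> (T2 - star_edges y A)"
    then obtain e where e: "e \<in> T2" "e \<notin> star_edges y A" "e' = \<alpha> ` e" by (auto simp: edge_image_def)
    have "e' \<notin> star_edges x A"
    proof
      assume "e' \<in> star_edges x A"
      then obtain w where w: "w \<in> A" "e' = {x, w}" by (auto simp: star_edges_def)
      then have "\<alpha> ` e = \<alpha> ` {y, w}" using e(3) \<alpha>_y \<alpha>_fix by simp
      then have "e = {y, w}" by (simp only: inj_image_eq_iff[OF \<alpha>_inj])
      then show False using e(2) w(1) by (auto simp: star_edges_def)
    qed
    then show "e' \<in> T3 - star_edges x A" using e unfolding T3_def edge_image_def by blast
  qed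
  with r1 have "reach (T3 - star_edges x A) y w0" by (rule reach_mono[rotated])
  with r have "reach (T3 - star_edges x A) x w0" by (meson rtranclp_trans)
  moreover have "T3 - star_edges x A \<subseteq> T3 - {{x, w0}}" using w0(1) by (auto simp: star_edges_def)
  ultimately have "reach (T3 - {{x, w0}}) x w0" by (rule reach_mono[rotated])
  then show False using acyclicD[OF acy3 in3] by simp
qed

text \<open>tree_map is injective: the two cases have disjoint images, and within each case
  moving a star (and applying \<alpha>) can be undone.\<close>
lemma tree_map_inj: "inj_on tree_map (spanning_trees merged_graph)"
proof (rule inj_onI)
  fix T1 T2
  assume T1: "T1 \<in> spanning_trees merged_graph" and T2: "T2 \<in> spanning_trees merged_graph"
    and eq: "tree_map T1 = tree_map T2"
  have away: "\<forall>w\<in>A. w \<noteq> y \<and> w \<noteq> x" "\<forall>w\<in>B. w \<noteq> y \<and> w \<noteq> x" using x_notin y_notin by auto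
  have "keeps_xy T1 \<longleftrightarrow> keeps_xy T2"
    using tree_map_keeps[OF T1] tree_map_keeps[OF T2] tree_map_not_keeps[OF T1]
      tree_map_not_keeps[OF T2] eq by (auto simp: tree_map_def split: if_splits)
  then consider "keeps_xy T1" "keeps_xy T2" | "\<not> keeps_xy T1" "\<not> keeps_xy T2" by blast
  then show "T1 = T2"
  proof cases
    case 1
    then have "move_star T1 y x A = move_star T2 y x A" using eq by (simp add: tree_map_def)
    then show ?thesis using merged_tree(2)[OF T1] merged_tree(2)[OF T2]
        move_star_inverse[OF x_ne_y[symmetric] away(1)] by (metis Un_iff)
  next
    case 2
    then have "edge_image \<alpha> (move_star T1 y x B) = edge_image \<alpha> (move_star T2 y x B)"
      using eq by (simp add: tree_map_def)
    then have "move_star T1 y x B = move_star T2 y x B"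
      using inj_edge_image[OF \<alpha>_inj] by (simp add: inj_eq)
    then show ?thesis using merged_tree(2)[OF T1] merged_tree(2)[OF T2]
        move_star_inverse[OF x_ne_y[symmetric] away(2)] by (metis Un_iff)
  qed
qed

theorem spanning_trees_le: "num_spanning_trees merged_graph \<le> num_spanning_trees split_graph"
  unfolding num_spanning_trees_def
  by (rule card_inj_on_le[OF tree_map_inj]) (auto intro: tree_map_in finite_spanning_trees)

end

section \<open>Determinants of rank-one and rank-two updates\<close>

definition outer :: "real^'n::finite \<Rightarrow> real^'n \<Rightarrow> real^'n^'n" where
  "outer a b = (\<chi> i j. a$i * b$j)"

lemma outer_zero_left [simp]: "outer 0 b = 0"
  by (simp add: outer_def vec_eq_iff)

lemma outer_mult_left: "outer a b ** C = outer a (b v* C)"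
  by (simp add: outer_def matrix_matrix_mult_def vector_matrix_mult_def vec_eq_iff
      sum_distrib_left mult.assoc)

lemma outer_mult_right: "C ** outer a b = outer (C *v a) b"
  by (simp add: outer_def matrix_matrix_mult_def matrix_vector_mult_def vec_eq_iff
      sum_distrib_right mult.assoc)

lemma outer_mult_outer: "outer a b ** outer c e = (b \<bullet> c) *\<^sub>R outer a e"
  by (simp add: outer_def matrix_matrix_mult_def inner_vec_def vec_eq_iff
      sum_distrib_left sum_distrib_right algebra_simps)

lemma outer_mult_vec: "outer a b *v c = (b \<bullet> c) *\<^sub>R a"
  by (simp add: outer_def matrix_vector_mult_def inner_vec_def vec_eq_iff
      sum_distrib_left sum_distrib_right algebra_simps)

lemma det_add_row_multiples:
  fixes A :: "real^'n::finite^'n"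
  assumes "finite J" "k \<notin> J"
  shows "det (\<chi> i. if i = k then v else if i \<in> J then A$i + c i *s v else A$i)
       = det (\<chi> i. if i = k then v else A$i)"
  using assms
proof (induction J rule: finite_induct)
  case empty
  then show ?case by (intro arg_cong[where f=det]) (simp add: vec_eq_iff)
next
  case (insert j J)
  let ?X = "(\<chi> i. if i = k then v else if i \<in> J then A$i + c i *s v else A$i) :: real^'n^'n"
  have jk: "j \<noteq> k" using insert by auto
  have "(\<chi> i. if i = k then v else if i \<in> insert j J then A$i + c i *s v else A$i)
        = (\<chi> m. if m = j then row j ?X + c j *s row k ?X else row m ?X)"
    using jk insert(2) by (auto simp: vec_eq_iff row_def)
  then show ?case using det_row_operation[OF jk, of ?X "c j"] insert by simp
qed

lemma det_add_rank_one_rows: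
  fixes A :: "real^'n::finite^'n"
  assumes "finite I"
  shows "det (\<chi> i. if i \<in> I then A$i + w$i *s v else A$i)
       = det A + (\<Sum>i\<in>I. w$i * det (\<chi> m. if m = i then v else A$m))"
  using assms
proof (induction I rule: finite_induct)
  case empty
  have "(\<chi> i. A$i) = A" by (simp add: vec_eq_iff)
  then show ?case by simp
next
  case (insert k I)
  let ?R = "\<lambda>i. if i \<in> I then A$i + w$i *s v else A$i"
  have "(\<chi> i. if i \<in> insert k I then A$i + w$i *s v else A$i)
       = (\<chi> i. if i = k then A$k + w$k *s v else ?R i)" by (auto simp: vec_eq_iff)
  moreover have "det (\<chi> i. if i = k then A$k + w$k *s v else ?R i)
      = det (\<chi> i. if i = k then A$k else ?R i) + det (\<chi> i. if i = k then w$k *s v else ?R i)"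
    using det_row_add[where a="\<lambda>i. A$k" and k=k and b="\<lambda>i. w$k *s v" and c= ?R] by simp
  moreover have "(\<chi> i. if i = k then A$k else ?R i) = (\<chi> i. ?R i)"
    using insert(2) by (auto simp: vec_eq_iff)
  moreover have "det (\<chi> i. if i = k then w$k *s v else ?R i) = w$k * det (\<chi> i. if i = k then v else ?R i)"
    using det_row_mul[where k=k and c="w$k" and a="\<lambda>i. v" and b= ?R] by simp
  moreover have "det (\<chi> i. if i = k then v else ?R i) = det (\<chi> i. if i = k then v else A$i)"
    using det_add_row_multiples[OF insert(1,2)] by simp
  ultimately show ?case using insert by (simp add: algebra_simps)
qed

text \<open>Cramer's rule: replacing row i by v multiplies the determinant by the i-th
  coordinate of v in the basis of rows.\<close>
lemma det_replace_row:
  fixes A Q :: "real^'n::finite^'n"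
  assumes "Q ** A = mat 1"
  shows "det (\<chi> m. if m = i then v else A$m) = (v v* Q)$i * det A"
proof -
  have "(\<Sum>m\<in>UNIV. (v v* Q)$m *s row m A) = (v v* Q) v* A"
    by (simp add: vec_eq_iff vector_matrix_mult_def row_def sum_component)
  also have "\<dots> = v" by (simp add: vector_matrix_mul_assoc assms)
  finally have "(\<chi> m. if m = i then v else A$m)
      = (\<chi> m. if m = i then (\<Sum>m\<in>UNIV. (v v* Q)$m *s row m A) else row m A)"
    by (simp add: row_def vec_eq_iff)
  then show ?thesis using cramer_lemma_transpose[of i "v v* Q" A] by simp
qed

lemma det_rank_one_update:
  fixes A Q :: "real^'n::finite^'n"
  assumes "Q ** A = mat 1"
  shows "det (A + outer w v) = det A * (1 + v \<bullet> (Q *v w))"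
proof -
  have "A + outer w v = (\<chi> i. if i \<in> UNIV then A$i + w$i *s v else A$i)"
    by (simp add: outer_def vec_eq_iff)
  then have "det (A + outer w v) = det A + (\<Sum>i\<in>UNIV. w$i * ((v v* Q)$i * det A))"
    using det_add_rank_one_rows[of UNIV A w v] det_replace_row[OF assms] by simp
  also have "\<dots> = det A * (1 + (v v* Q) \<bullet> w)"
    by (simp add: inner_vec_def algebra_simps sum_distrib_left)
  finally show ?thesis by (simp add: dot_lmul_matrix)
qed

lemma matrix_add_rdistrib: "((A::real^'n::finite^'m) + B) ** (C::real^'k^'n) = A ** C + B ** C"
  by (vector matrix_matrix_mult_def sum.distrib[symmetric] field_simps)

lemma matrix_diff_rdistrib: "((A::real^'n::finite^'m) - B) ** (C::real^'k^'n) = A ** C - B ** C"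
  by (vector matrix_matrix_mult_def sum_subtractf[symmetric] field_simps)

text \<open>A symmetric rank-two update d z^T + z d^T whose two directions are orthogonal
  with respect to A^-1: apply the rank-one formula twice, updating the inverse
  after the first step.\<close>
lemma det_rank_two_update:
  fixes M Q :: "real^'n::finite^'n"
  assumes QM: "Q ** M = mat 1" and dz: "z \<bullet> (Q *v d) = 0" and zd: "d \<bullet> (Q *v z) = 0"
  shows "det (M + outer d z + outer z d) = det M * (1 - (d \<bullet> (Q *v d)) * (z \<bullet> (Q *v z)))"
proof -
  define M1 where "M1 = M + outer d z"
  define Q1 where "Q1 = Q - outer (Q *v d) (z v* Q)"
  have det_M1: "det M1 = det M" using det_rank_one_update[OF QM, of d z] dz by (simp add: M1_def)
  have zQd: "(z v* Q) \<bullet> d = 0" using dz by (simp add: dot_lmul_matrix)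
  have "Q1 ** M1 = Q ** M + Q ** outer d z - outer (Q *v d) (z v* Q) ** M
      - outer (Q *v d) (z v* Q) ** outer d z"
    by (simp add: Q1_def M1_def matrix_add_ldistrib algebra_simps
        matrix_add_rdistrib matrix_diff_rdistrib)
  also have "\<dots> = mat 1"
    using QM by (simp add: outer_mult_outer zQd outer_mult_left outer_mult_right
        outer_mult_vec vector_matrix_mul_assoc)
  finally have Q1M1: "Q1 ** M1 = mat 1" .
  have "Q1 *v z = Q *v z - (z \<bullet> (Q *v z)) *\<^sub>R (Q *v d)"
    by (simp add: Q1_def matrix_vector_mult_diff_rdistrib outer_mult_vec dot_lmul_matrix)
  then have "d \<bullet> (Q1 *v z) = - (d \<bullet> (Q *v d)) * (z \<bullet> (Q *v z))"
    using zd by (simp add: inner_diff_right)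
  then show ?thesis
    using det_rank_one_update[OF Q1M1, of z d] det_M1 by (simp add: M1_def)
qed

text \<open>Nonnegative symmetric edge weights, the weighted Laplacian L, shifted by t I
  and by the all-\<beta> matrix \<beta> J.\<close>
definition symmetric_weights :: "('n \<Rightarrow> 'n \<Rightarrow> real) \<Rightarrow> bool" where
  "symmetric_weights c \<longleftrightarrow> (\<forall>i j. c i j = c j i) \<and> (\<forall>i j. 0 \<le> c i j)"

definition shifted_laplacian :: "real \<Rightarrow> real \<Rightarrow> ('n::finite \<Rightarrow> 'n \<Rightarrow> real) \<Rightarrow> real^'n^'n" where
  "shifted_laplacian t \<beta> c = (\<chi> i j. (if i = j then t + (\<Sum>k\<in>UNIV. c i k) else 0) + \<beta> - c i j)"

lemma shifted_laplacian_mult_vec: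
  "(shifted_laplacian t \<beta> c *v u)$i
    = t * u$i + (\<Sum>k\<in>UNIV. c i k * (u$i - u$k)) + \<beta> * (\<Sum>j\<in>UNIV. u$j)"
proof -
  let ?T = "t + (\<Sum>k\<in>UNIV. c i k)"
  have "(shifted_laplacian t \<beta> c *v u)$i
      = (\<Sum>j\<in>UNIV. (if i = j then ?T * u$j else 0) + \<beta> * u$j - c i j * u$j)"
    by (auto simp: shifted_laplacian_def matrix_vector_mult_def algebra_simps intro!: sum.cong)
  also have "\<dots> = ?T * u$i + \<beta> * (\<Sum>j\<in>UNIV. u$j) - (\<Sum>j\<in>UNIV. c i j * u$j)"
    by (simp add: sum.distrib sum_subtractf sum_distrib_left sum.delta)
  finally show ?thesis by (simp add: algebra_simps sum_subtractf sum_distrib_left sum_distrib_right)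
qed

lemma laplacian_sum_zero:
  assumes "symmetric_weights c"
  shows "(\<Sum>i\<in>UNIV. \<Sum>k\<in>UNIV. c i k * (u$i - u$k)) = (0::real)"
proof -
  have "(\<Sum>i\<in>UNIV. \<Sum>k\<in>UNIV. c i k * u$k) = (\<Sum>k\<in>UNIV. \<Sum>i\<in>UNIV. c i k * u$k)" by (rule sum.swap)
  also have "\<dots> = (\<Sum>i\<in>UNIV. \<Sum>k\<in>UNIV. c i k * u$i)"
    using assms by (metis (no_types, lifting) sum.cong symmetric_weights_def)
  finally show ?thesis by (simp add: algebra_simps sum_subtractf)
qed

text \<open>The Laplacian quadratic form is a sum of weighted squares (u_i - u_k)^2.\<close>
lemma laplacian_form_nonneg:
  assumes "symmetric_weights c"
  shows "0 \<le> (\<Sum>i\<in>UNIV. \<Sum>k\<in>UNIV. c i k * (u$i - u$k) * u$i :: real)"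
proof -
  let ?S = "\<Sum>i\<in>UNIV. \<Sum>k\<in>UNIV. c i k * (u$i - u$k) * u$i"
  have "?S = (\<Sum>k\<in>UNIV. \<Sum>i\<in>UNIV. c i k * (u$i - u$k) * u$i)" by (rule sum.swap)
  also have "\<dots> = (\<Sum>i\<in>UNIV. \<Sum>k\<in>UNIV. c i k * (u$k - u$i) * u$k)"
    using assms unfolding symmetric_weights_def by (metis (no_types, lifting) sum.cong)
  finally have "2 * ?S = ?S + (\<Sum>i\<in>UNIV. \<Sum>k\<in>UNIV. c i k * (u$k - u$i) * u$k)" by simp
  also have "\<dots> = (\<Sum>i\<in>UNIV. \<Sum>k\<in>UNIV. c i k * (u$i - u$k)^2)"
    by (simp add: sum.distrib[symmetric] power2_eq_square algebra_simps)
  finally have "2 * ?S = (\<Sum>i\<in>UNIV. \<Sum>k\<in>UNIV. c i k * (u$i - u$k)^2)" .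
  moreover have "0 \<le> (\<Sum>i\<in>UNIV. \<Sum>k\<in>UNIV. c i k * (u$i - u$k)^2)"
    using assms by (intro sum_nonneg) (simp add: symmetric_weights_def)
  ultimately show ?thesis by simp
qed

lemma shifted_laplacian_form:
  assumes "symmetric_weights c" "\<beta> \<ge> 0"
  shows "t * (u \<bullet> u) \<le> u \<bullet> (shifted_laplacian t \<beta> c *v u)"
proof -
  have "u \<bullet> (shifted_laplacian t \<beta> c *v u)
      = t * (u \<bullet> u) + (\<Sum>i\<in>UNIV. \<Sum>k\<in>UNIV. c i k * (u$i - u$k) * u$i) + \<beta> * (\<Sum>j\<in>UNIV. u$j)^2"
    by (simp add: inner_vec_def shifted_laplacian_mult_vec algebra_simps sum.distrib
        sum_distrib_left sum_distrib_right power2_eq_square)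
  then show ?thesis using laplacian_form_nonneg[OF assms(1), of u] assms(2) by simp
qed

lemma shifted_laplacian_invertible:
  assumes "symmetric_weights c" "t > 0" "\<beta> \<ge> 0"
  shows "invertible (shifted_laplacian t \<beta> c)"
proof -
  have "u = 0" if "shifted_laplacian t \<beta> c *v u = 0" for u
  proof -
    have "t * (u \<bullet> u) \<le> 0" using shifted_laplacian_form[OF assms(1,3), of t u] that by simp
    then have "u \<bullet> u \<le> 0" using assms(2) by (simp add: mult_le_0_iff)
    then show "u = 0" by (meson inner_eq_zero_iff inner_ge_zero order.antisym)
  qed
  then show ?thesis unfolding invertible_left_inverse matrix_left_invertible_ker by blast
qed

text \<open>Continuity of a case distinction on a condition independent of the variable;
  the entries of the deformed matrix below contain such case distinctions.\<close>
lemma continuous_on_if_const: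
  "continuous_on S f \<Longrightarrow> continuous_on S g \<Longrightarrow> continuous_on S (\<lambda>x. if P then f x else g x)"
  by (cases P) auto

text \<open>The determinant is positive: deform c and \<beta> linearly to 0, where the matrix
  is t I, through invertible matrices.\<close>
lemma shifted_laplacian_det_pos:
  fixes c :: "'n::finite \<Rightarrow> 'n \<Rightarrow> real"
  assumes c: "symmetric_weights c" and t: "t > 0"
  shows "det (shifted_laplacian t 1 c) > 0"
proof (rule ccontr)
  define f where "f s = det (shifted_laplacian t s (\<lambda>i j. s * c i j))" for s
  assume "\<not> det (shifted_laplacian t 1 c) > 0"
  then have "f 1 \<le> 0" by (simp add: f_def)
  moreover have "f 0 = t ^ CARD('n)"
    unfolding f_def by (subst det_diagonal) (simp_all add: shifted_laplacian_def)
  moreover have "continuous_on {0..1} f"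
    unfolding f_def det_def shifted_laplacian_def
    by (simp, intro continuous_intros continuous_on_if_const)
  ultimately obtain s where s: "0 \<le> s" "s \<le> 1" "f s = 0"
    using IVT2'[of f 1 0 0] t by auto
  have "symmetric_weights (\<lambda>i j. s * c i j)" using c s(1) by (auto simp: symmetric_weights_def)
  from shifted_laplacian_invertible[OF this t s(1)] show False
    using s(3) by (simp add: f_def invertible_det_nz)
qed

text \<open>Solving N u = f for f with zero sum: then u has zero sum.\<close>
lemma shifted_laplacian_solution:
  fixes c :: "'n::finite \<Rightarrow> 'n \<Rightarrow> real"
  assumes c: "symmetric_weights c" and t: "t > 0" and \<beta>: "\<beta> \<ge> 0"
    and u: "shifted_laplacian t \<beta> c *v u = f" and f: "(\<Sum>i\<in>UNIV. f$i) = 0"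
  shows "(\<Sum>i\<in>UNIV. u$i) = 0" "\<And>i. t * u$i + (\<Sum>k\<in>UNIV. c i k * (u$i - u$k)) = f$i"
proof -
  have "(\<Sum>i\<in>UNIV. f$i) = (t + \<beta> * real CARD('n)) * (\<Sum>i\<in>UNIV. u$i)"
    unfolding u[symmetric] using laplacian_sum_zero[OF c, of u]
    by (simp add: shifted_laplacian_mult_vec sum.distrib sum_distrib_left algebra_simps)
  moreover have "t + \<beta> * real CARD('n) > 0" using t \<beta> by (simp add: add_pos_nonneg)
  ultimately show sum_u: "(\<Sum>i\<in>UNIV. u$i) = 0" using f by simp
  show "t * u$i + (\<Sum>k\<in>UNIV. c i k * (u$i - u$k)) = f$i" for i
    using shifted_laplacian_mult_vec[of t \<beta> c u i] u sum_u by simp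
qed

text \<open>Maximum principle: where u is maximal, the Laplacian term is nonnegative.\<close>
lemma maximum_principle:
  fixes u :: "real^'n::finite"
  assumes c: "symmetric_weights c" and eq: "\<And>i. t * u$i + (\<Sum>k\<in>UNIV. c i k * (u$i - u$k)) = f i"
  shows "\<exists>m. (\<forall>v. u$v \<le> u$m) \<and> t * u$m \<le> f m"
proof -
  obtain m where m: "\<forall>v. u$v \<le> u$m"
    using Max_in[of "range (\<lambda>v. u$v)"] Max_ge[of "range (\<lambda>v. u$v)"] by fastforce
  have "0 \<le> (\<Sum>k\<in>UNIV. c m k * (u$m - u$k))"
    using c m by (intro sum_nonneg) (auto simp: symmetric_weights_def)
  then show ?thesis using eq[of m] m by (intro exI[of _ m]) auto
qed

lemma nonpos_sum_zero:
  fixes u :: "real^'n::finite"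
  assumes "\<forall>v. u$v \<le> 0" "(\<Sum>i\<in>UNIV. u$i) = 0"
  shows "u = 0"
proof -
  have "(\<Sum>i\<in>UNIV. - u$i) = 0" using assms(2) by (simp add: sum_negf)
  then have "\<forall>i. - u$i = 0" using assms(1) by (subst (asm) sum_nonneg_eq_0_iff) auto
  then show ?thesis by (simp add: vec_eq_iff)
qed

lemma shifted_laplacian_inverse_form:
  assumes c: "symmetric_weights c" and "t \<ge> 0" "\<beta> \<ge> 0"
    and QN: "Q ** shifted_laplacian t \<beta> c = mat 1"
  shows "0 \<le> d \<bullet> (Q *v d)"
proof -
  define u where "u = Q *v d"
  have "shifted_laplacian t \<beta> c ** Q = mat 1" using QN matrix_left_right_inverse by blast
  then have "shifted_laplacian t \<beta> c *v u = d" by (simp add: u_def matrix_vector_mul_assoc)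
  then have "d \<bullet> (Q *v d) = u \<bullet> (shifted_laplacian t \<beta> c *v u)" by (simp add: u_def inner_commute)
  also have "t * (u \<bullet> u) \<le> \<dots>" by (rule shifted_laplacian_form[OF c \<open>\<beta> \<ge> 0\<close>])
  finally show ?thesis using \<open>t \<ge> 0\<close> by (meson inner_ge_zero order.trans zero_le_mult_iff)
qed

lemma shifted_laplacian_perturb:
  fixes c c' :: "'n::finite \<Rightarrow> 'n \<Rightarrow> real"
  assumes c': "\<And>i j. c' i j - c i j = (if i = j then 0 else -(d$i * z$j + z$i * d$j))"
    and d: "(\<Sum>i\<in>UNIV. d$i) = 0" and z: "(\<Sum>i\<in>UNIV. z$i) = 0"
  shows "shifted_laplacian t \<beta> c' = shifted_laplacian t \<beta> c + outer d z + outer z d"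
proof -
  have row_sum: "(\<Sum>k\<in>UNIV. c' i k) = (\<Sum>k\<in>UNIV. c i k) + 2 * d$i * z$i" for i
  proof -
    let ?g = "\<lambda>k. -(d$i * z$k + z$i * d$k)"
    have "(\<Sum>k\<in>UNIV. c' i k) - (\<Sum>k\<in>UNIV. c i k) = (\<Sum>k\<in>UNIV. ?g k - (if i = k then ?g k else 0))"
      using c' by (auto simp: sum_subtractf[symmetric] intro!: sum.cong)
    also have "\<dots> = - (d$i * (\<Sum>k\<in>UNIV. z$k) + z$i * (\<Sum>k\<in>UNIV. d$k)) - ?g i"
      by (simp add: sum_subtractf sum.distrib sum_distrib_left sum_negf[symmetric])
    finally show ?thesis using d z by simp
  qed
  show ?thesis
    using c' row_sum by (auto simp: vec_eq_iff shifted_laplacian_def outer_def algebra_simps)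
qed

definition adjacency :: "('a \<Rightarrow> 'a \<Rightarrow> bool) \<Rightarrow> 'a \<Rightarrow> 'a \<Rightarrow> real" where
  "adjacency E i j = (if E i j then 1 else 0)"

lemma sum_bij_reindex: "bij \<sigma> \<Longrightarrow> (\<Sum>i\<in>UNIV. g (\<sigma> i)) = (\<Sum>i\<in>UNIV. g i)"
  using sum.reindex_bij_betw[of \<sigma> UNIV UNIV g] by (simp add: bij_def)

lemma inverse_invariant:
  fixes M Q :: "real^'n::finite^'n"
  assumes \<sigma>: "bij \<sigma>" and M: "\<And>i j. M $ \<sigma> i $ \<sigma> j = M $ i $ j" and QM: "Q ** M = mat 1"
  shows "Q $ \<sigma> i $ \<sigma> j = Q $ i $ j"
proof -
  define Q\<sigma> where "Q\<sigma> = (\<chi> i j. Q $ \<sigma> i $ \<sigma> j)"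
  have "(Q\<sigma> ** M) $ i $ j = (mat 1 :: real^'n^'n) $ i $ j" for i j
  proof -
    have "(Q\<sigma> ** M) $ i $ j = (\<Sum>k\<in>UNIV. Q $ \<sigma> i $ \<sigma> k * M $ \<sigma> k $ \<sigma> j)"
      by (simp add: Q\<sigma>_def matrix_matrix_mult_def M)
    also have "\<dots> = (Q ** M) $ \<sigma> i $ \<sigma> j"
      using sum_bij_reindex[OF \<sigma>, of "\<lambda>k. Q $ \<sigma> i $ k * M $ k $ \<sigma> j"]
      by (simp add: matrix_matrix_mult_def)
    finally show ?thesis using QM \<sigma> by (simp add: mat_def bij_is_inj inj_eq)
  qed
  then have "Q\<sigma> ** M = mat 1" by (simp add: vec_eq_iff)
  then have "Q\<sigma> = Q" using QM by (metis matrix_left_right_inverse matrix_mul_assoc matrix_mul_lid)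
  then show ?thesis by (simp add: Q\<sigma>_def vec_eq_iff)
qed

lemma invariant_mult_vec:
  fixes Q :: "real^'n::finite^'n"
  assumes \<sigma>: "bij \<sigma>" and Q: "\<And>i j. Q $ \<sigma> i $ \<sigma> j = Q $ i $ j" and v: "\<And>i. v $ \<sigma> i = v $ i"
  shows "(Q *v v) $ \<sigma> i = (Q *v v) $ i"
  using sum_bij_reindex[OF \<sigma>, of "\<lambda>j. Q $ \<sigma> i $ j * v $ j"]
  by (simp add: matrix_vector_mult_def Q v)

lemma invariant_form_antisymmetric:
  fixes Q :: "real^'n::finite^'n"
  assumes \<sigma>: "bij \<sigma>" and Q: "\<And>i j. Q $ \<sigma> i $ \<sigma> j = Q $ i $ j"
    and a: "\<And>i. a $ \<sigma> i = - a $ i" and b: "\<And>i. b $ \<sigma> i = b $ i"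
  shows "b \<bullet> (Q *v a) = 0" "a \<bullet> (Q *v b) = 0"
proof -
  have zero: "(\<Sum>i\<in>UNIV. \<Sum>j\<in>UNIV. f i j) = 0"
    if "\<And>i j. f (\<sigma> i) (\<sigma> j) = - f i j" for f :: "'n \<Rightarrow> 'n \<Rightarrow> real"
  proof -
    have "(\<Sum>i\<in>UNIV. \<Sum>j\<in>UNIV. f (\<sigma> i) (\<sigma> j)) = (\<Sum>i\<in>UNIV. \<Sum>j\<in>UNIV. f (\<sigma> i) j)"
      using sum_bij_reindex[OF \<sigma>, of "f (\<sigma> _)"] by simp
    also have "\<dots> = (\<Sum>i\<in>UNIV. \<Sum>j\<in>UNIV. f i j)"
      using sum_bij_reindex[OF \<sigma>, of "\<lambda>i. \<Sum>j\<in>UNIV. f i j"] by simp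
    finally show ?thesis by (simp add: that sum_negf)
  qed
  show "b \<bullet> (Q *v a) = 0" "a \<bullet> (Q *v b) = 0"
    using zero[of "\<lambda>i j. b$i * Q$i$j * a$j"] zero[of "\<lambda>i j. a$i * Q$i$j * b$j"]
    by (simp_all add: inner_vec_def matrix_vector_mult_def sum_distrib_left mult.assoc a b Q)
qed

section \<open>The determinant inequality\<close>

context star_pair
begin

text \<open>Both graphs are rank-two perturbations of one \<alpha>-invariant weighted graph, in
  which x and y are each joined to all of A \<union> B with weight 1/2.\<close>
definition averaged_weight :: "'a \<Rightarrow> 'a \<Rightarrow> real" where
  "averaged_weight i j = adjacency H i j +
     (if ((i = x \<or> i = y) \<and> j \<in> A \<union> B) \<or> ((j = x \<or> j = y) \<and> i \<in> A \<union> B) then 1/2 else 0)"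

definition diff_xy :: "real^'a" where
  "diff_xy = (\<chi> i. (if i = y then 1 else 0) - (if i = x then 1 else 0))"

definition mid_xy :: "real^'a" where
  "mid_xy = (\<chi> i. ((if i = x then 1 else 0) + (if i = y then 1 else 0)) / 2)"

definition star_vec :: "'a set \<Rightarrow> real^'a" where
  "star_vec P = (\<chi> i. real (card P) * mid_xy$i - (if i \<in> P then 1 else 0))"

text \<open>The second directions of the perturbations for the split and the merged graph.\<close>
definition z_split :: "real^'a" where "z_split = (1/2) *\<^sub>R (star_vec B - star_vec A)"
definition z_merged :: "real^'a" where "z_merged = (1/2) *\<^sub>R (star_vec A + star_vec B)"

lemma diff_xy_nth: "diff_xy$i = (if i = y then 1 else if i = x then -1 else 0)"
  using x_ne_y by (auto simp: diff_xy_def)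

lemma star_vec_nth:
  "P \<subseteq> A \<union> B \<Longrightarrow>
    star_vec P $ i = (if i = x \<or> i = y then real (card P) / 2 else - (if i \<in> P then 1 else 0))"
  using x_ne_y x_notin y_notin by (auto simp: star_vec_def mid_xy_def)

lemma z_split_nth: "z_split$i = (if i = x \<or> i = y then (real (card B) - real (card A)) / 4
   else ((if i \<in> A then 1 else 0) - (if i \<in> B then 1 else 0)) / 2)"
  by (simp add: z_split_def star_vec_nth)

lemma z_merged_nth: "z_merged$i = (if i = x \<or> i = y then (real (card A) + real (card B)) / 4
   else - ((if i \<in> A then 1 else 0) + (if i \<in> B then 1 else 0)) / 2)"
  by (simp add: z_merged_def star_vec_nth)

lemma sum_diff_xy: "(\<Sum>i\<in>UNIV. diff_xy$i) = 0"
  by (simp add: diff_xy_def sum_subtractf)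

lemma sum_star_vec: "(\<Sum>i\<in>UNIV. star_vec P $ i) = 0"
proof -
  have "(\<Sum>i\<in>UNIV. mid_xy$i) = 1"
    using x_ne_y by (simp add: mid_xy_def sum_divide_distrib[symmetric] sum.distrib)
  then show ?thesis
    by (simp add: star_vec_def sum_subtractf sum_distrib_left[symmetric] sum.If_cases)
qed

lemma sum_z_split: "(\<Sum>i\<in>UNIV. z_split$i) = 0"
  by (simp add: z_split_def sum_divide_distrib[symmetric] sum_subtractf sum_star_vec)

lemma sum_z_merged: "(\<Sum>i\<in>UNIV. z_merged$i) = 0"
  by (simp add: z_merged_def sum_divide_distrib[symmetric] sum.distrib sum_star_vec)

lemma split_matrix:
  "shifted_laplacian t \<beta> (adjacency split_graph)
    = shifted_laplacian t \<beta> averaged_weight + outer diff_xy z_split + outer z_split diff_xy"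
proof (rule shifted_laplacian_perturb[OF _ sum_diff_xy sum_z_split])
  show "adjacency split_graph i j - averaged_weight i j
      = (if i = j then 0 else -(diff_xy$i * z_split$j + z_split$i * diff_xy$j))" for i j
    using x_ne_y x_notin y_notin A_B_disjoint no_H_to_x no_H_to_y no_H_x no_H_y H_irrefl
    by (auto simp: adjacency_def averaged_weight_def add_star_def diff_xy_nth z_split_nth field_simps)
qed

lemma merged_matrix:
  "shifted_laplacian t \<beta> (adjacency merged_graph)
    = shifted_laplacian t \<beta> averaged_weight + outer diff_xy z_merged + outer z_merged diff_xy"
proof (rule shifted_laplacian_perturb[OF _ sum_diff_xy sum_z_merged])
  show "adjacency merged_graph i j - averaged_weight i j
      = (if i = j then 0 else -(diff_xy$i * z_merged$j + z_merged$i * diff_xy$j))" for i j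
    using x_ne_y x_notin y_notin A_B_disjoint no_H_to_x no_H_to_y no_H_x no_H_y H_irrefl
    by (auto simp: adjacency_def averaged_weight_def add_star_def diff_xy_nth z_merged_nth field_simps)
qed

lemma averaged_weight_symmetric: "symmetric_weights averaged_weight"
  using H_sym by (auto simp: symmetric_weights_def averaged_weight_def adjacency_def)

lemma averaged_matrix_invariant:
  "shifted_laplacian t \<beta> averaged_weight $ \<alpha> i $ \<alpha> j = shifted_laplacian t \<beta> averaged_weight $ i $ j"
proof -
  have w: "averaged_weight (\<alpha> i) (\<alpha> j) = averaged_weight i j" for i j
    using \<alpha>_aut[of i j] \<alpha>_eq_x_iff \<alpha>_eq_y_iff \<alpha>_mem_iff
    by (auto simp: averaged_weight_def adjacency_def)
  have "(\<Sum>k\<in>UNIV. averaged_weight (\<alpha> i) k) = (\<Sum>k\<in>UNIV. averaged_weight i k)"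
    using sum_bij_reindex[OF \<alpha>_bij, of "averaged_weight (\<alpha> i)"] by (simp add: w)
  then show ?thesis using \<alpha>_inj by (auto simp: shifted_laplacian_def w inj_eq)
qed

lemma diff_xy_antisymmetric: "diff_xy $ \<alpha> i = - diff_xy $ i"
  by (simp add: diff_xy_def \<alpha>_eq_x_iff \<alpha>_eq_y_iff)

lemma star_vec_symmetric: "P = A \<or> P = B \<Longrightarrow> star_vec P $ \<alpha> i = star_vec P $ i"
  by (auto simp: star_vec_def mid_xy_def \<alpha>_eq_x_iff \<alpha>_eq_y_iff \<alpha>_mem_iff add.commute)

text \<open>Key estimate: star_vec R \<bullet> Q star_vec P \<ge> 0.  The solution u of N u = star_vec P
  takes its maximum at x and y (maximum principle and symmetry), so pairing it with
  the star R gives |R| u_x - \<Sum>_{i\<in>R} u_i \<ge> 0.\<close>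
lemma star_vec_form_nonneg:
  assumes t: "t > 0" and QN: "Q ** shifted_laplacian t 1 averaged_weight = mat 1"
    and P: "P = A \<or> P = B" and R: "R = A \<or> R = B"
  shows "star_vec R \<bullet> (Q *v star_vec P) \<ge> 0"
proof -
  let ?N = "shifted_laplacian t 1 averaged_weight"
  define u where "u = Q *v star_vec P"
  have "?N ** Q = mat 1" using QN matrix_left_right_inverse by blast
  then have "?N *v u = star_vec P" by (simp add: u_def matrix_vector_mul_assoc)
  note sol = shifted_laplacian_solution[OF averaged_weight_symmetric t zero_le_one this sum_star_vec]
  have u_xy: "u$x = u$y"
    using invariant_mult_vec[OF \<alpha>_bij inverse_invariant[OF \<alpha>_bij averaged_matrix_invariant QN]
        star_vec_symmetric[OF P], of y]
    by (simp add: u_def \<alpha>_y)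
  obtain m where m: "\<forall>v. u$v \<le> u$m" "t * u$m \<le> star_vec P $ m"
    using maximum_principle[OF averaged_weight_symmetric sol(2)] by blast
  have max_x: "u$v \<le> u$x" for v
  proof (cases "m = x \<or> m = y")
    case True
    then show ?thesis using m(1) u_xy by auto
  next
    case False
    then have "star_vec P $ m \<le> 0" using P by (auto simp: star_vec_nth)
    then have "u$m \<le> 0" using m(2) t by (smt (verit) mult_pos_pos)
    then have "u = 0" using m(1) sol(1) nonpos_sum_zero by (meson order.trans)
    then show ?thesis by simp
  qed
  have "(\<Sum>i\<in>UNIV. mid_xy$i * u$i)
      = (\<Sum>i\<in>UNIV. (if i = x then u$i else 0) + (if i = y then u$i else 0)) / 2"
    by (auto simp: mid_xy_def sum_divide_distrib[symmetric] intro!: sum.cong)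
  also have "\<dots> = u$x" using u_xy by (simp add: sum.distrib sum.delta')
  finally have mid: "(\<Sum>i\<in>UNIV. mid_xy$i * u$i) = u$x" .
  have "star_vec R \<bullet> u = (\<Sum>i\<in>UNIV. real (card R) * (mid_xy$i * u$i) - (if i \<in> R then u$i else 0))"
    unfolding star_vec_def inner_vec_def by (intro sum.cong) (auto simp: algebra_simps)
  also have "\<dots> = real (card R) * u$x - (\<Sum>i\<in>R. u$i)"
    using mid by (simp add: sum_subtractf sum_distrib_left[symmetric] sum.If_cases)
  also have "\<dots> = (\<Sum>i\<in>R. u$x - u$i)" by (simp add: sum_subtractf)
  also have "\<dots> \<ge> 0" using max_x by (intro sum_nonneg) auto
  finally show ?thesis by (simp add: u_def)
qed

text \<open>Second main inequality: det(t I + L + J) is larger for the split graph, for t > 0.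
  Both determinants equal det N (1 - \<delta> z.Qz) with \<delta> \<ge> 0, and z.Qz is smaller for
  the split graph by the key estimate.\<close>
theorem det_split_ge_merged:
  assumes t: "t > 0"
  shows "det (shifted_laplacian t 1 (adjacency merged_graph))
    \<le> det (shifted_laplacian t 1 (adjacency split_graph))"
proof -
  let ?N = "shifted_laplacian t 1 averaged_weight"
  have "invertible ?N" by (rule shifted_laplacian_invertible[OF averaged_weight_symmetric t]) simp
  then obtain Q where QN: "Q ** ?N = mat 1" unfolding invertible_left_inverse by blast
  have Q_inv: "Q $ \<alpha> i $ \<alpha> j = Q $ i $ j" for i j
    by (rule inverse_invariant[OF \<alpha>_bij averaged_matrix_invariant QN])
  define \<delta> where "\<delta> = diff_xy \<bullet> (Q *v diff_xy)"
  have \<delta>: "\<delta> \<ge> 0" unfolding \<delta>_def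
    using shifted_laplacian_inverse_form[OF averaged_weight_symmetric _ _ QN] t by simp
  have z_sym: "z_split $ \<alpha> i = z_split $ i" "z_merged $ \<alpha> i = z_merged $ i" for i
    using star_vec_symmetric by (simp_all add: z_split_def z_merged_def)
  note orth = invariant_form_antisymmetric[OF \<alpha>_bij Q_inv diff_xy_antisymmetric]
  have det_split: "det (shifted_laplacian t 1 (adjacency split_graph))
      = det ?N * (1 - \<delta> * (z_split \<bullet> (Q *v z_split)))"
    unfolding split_matrix \<delta>_def by (rule det_rank_two_update[OF QN orth[OF z_sym(1)]])
  have det_merged: "det (shifted_laplacian t 1 (adjacency merged_graph))
      = det ?N * (1 - \<delta> * (z_merged \<bullet> (Q *v z_merged)))"
    unfolding merged_matrix \<delta>_def by (rule det_rank_two_update[OF QN orth[OF z_sym(2)]])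
  have "z_merged \<bullet> (Q *v z_merged) - z_split \<bullet> (Q *v z_split)
      = (star_vec B \<bullet> (Q *v star_vec A) + star_vec A \<bullet> (Q *v star_vec B)) / 2"
    by (simp add: z_merged_def z_split_def algebra_simps inner_diff_left inner_diff_right)
  moreover have "star_vec B \<bullet> (Q *v star_vec A) \<ge> 0" "star_vec A \<bullet> (Q *v star_vec B) \<ge> 0"
    using star_vec_form_nonneg[OF t QN] by auto
  ultimately have "z_split \<bullet> (Q *v z_split) \<le> z_merged \<bullet> (Q *v z_merged)" by simp
  then have "1 - \<delta> * (z_merged \<bullet> (Q *v z_merged)) \<le> 1 - \<delta> * (z_split \<bullet> (Q *v z_split))"
    using \<delta> by (simp add: mult_left_mono)
  then show ?thesis unfolding det_split det_merged
    using shifted_laplacian_det_pos[OF averaged_weight_symmetric t] by (simp add: mult_left_mono)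
qed

end

section \<open>The Laplacian polynomial of a complement\<close>

lemma poly_det:
  fixes M :: "real poly^'n::finite^'n"
  shows "poly (det M) a = det (\<chi> i j. poly (M$i$j) a)"
  unfolding det_def by (simp add: poly_sum poly_prod)

lemma card_Collect_as_sum: "real (card {u::'a::finite. P u}) = (\<Sum>j\<in>UNIV. if P j then 1 else 0)"
  by (simp add: sum.If_cases)

text \<open>det(\<lambda> I - L) vanishes at 0 (the rows of L sum to 0), so P(\<lambda>) = det(\<lambda> I - L) / \<lambda>.\<close>
lemma lap_poly_eval:
  fixes E :: "'a::finite \<Rightarrow> 'a \<Rightarrow> bool"
  assumes lam: "lam \<noteq> 0"
  shows "poly (lap_poly E) lam = det (\<chi> i j. (if i = j then lam else 0) - laplacian E $ i $ j) / lam"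
proof -
  let ?cp = "lap_charpoly E"
  have ev: "poly ?cp a = det (\<chi> i j. (if i = j then a else 0) - laplacian E $ i $ j)" for a
    unfolding lap_charpoly_def poly_det by (intro arg_cong[where f=det]) (simp add: vec_eq_iff)
  have "(\<Sum>j\<in>UNIV. laplacian E $ i $ j) = 0" for i
    by (simp add: laplacian_def sum_subtractf Defs.degree_def nbhd_def card_Collect_as_sum)
  then have "(\<chi> i j. (if i = j then 0 else 0) - laplacian E $ i $ j) *v (\<chi> i. 1) = (0::real^'a)"
    by (simp add: matrix_vector_mult_def vec_eq_iff sum_negf)
  then have "\<not> invertible (\<chi> i j. (if i = j then 0 else 0) - laplacian E $ i $ j :: real^'a^'a)"
    unfolding invertible_left_inverse matrix_left_invertible_ker by (metis one_neq_zero vec_lambda_beta zero_index)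
  then have "poly ?cp 0 = 0" unfolding ev by (simp add: invertible_det_nz)
  then have "[:0, 1:] dvd ?cp" using dvd_iff_poly_eq_0[of 0 ?cp] by simp
  then have "?cp = [:0, 1:] * lap_poly E" unfolding lap_poly_def by (rule dvd_mult_div_cancel[symmetric])
  then have "poly ?cp lam = lam * poly (lap_poly E) lam" by simp
  then show ?thesis using lam ev[of lam] by (simp add: field_simps)
qed

lemma complement_charmatrix:
  fixes E :: "'a::finite \<Rightarrow> 'a \<Rightarrow> bool"
  assumes irr: "\<And>v. \<not> E v v"
  shows "(\<chi> i j. (if i = j then lam else 0) - laplacian (compl_graph E) $ i $ j)
    = shifted_laplacian (lam - real CARD('a)) 1 (adjacency E)"
proof -
  have deg: "real (degree (compl_graph E) i) = real CARD('a) - 1 - real (degree E i)" for i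
  proof -
    have "{u. compl_graph E i u} = UNIV - insert i {u. E i u}" by (auto simp: compl_graph_def)
    moreover have "card (insert i {u. E i u}) = card {u. E i u} + 1" using irr by simp
    moreover have "card (insert i {u. E i u}) \<le> CARD('a)" by (rule card_mono) auto
    ultimately show ?thesis by (simp add: Defs.degree_def nbhd_def card_Diff_subset of_nat_diff)
  qed
  have "(\<Sum>k\<in>UNIV. adjacency E i k) = real (Defs.degree E i)" for i
    by (simp add: adjacency_def Defs.degree_def nbhd_def card_Collect_as_sum)
  then show ?thesis using irr
    by (auto simp: vec_eq_iff shifted_laplacian_def laplacian_def deg adjacency_def compl_graph_def)
qed

lemma lap_poly_complement:
  fixes E :: "'a::finite \<Rightarrow> 'a \<Rightarrow> bool"
  assumes "\<And>v. \<not> E v v" "lam \<noteq> 0"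
  shows "poly (lap_poly (compl_graph E)) lam
    = det (shifted_laplacian (lam - real CARD('a)) 1 (adjacency E)) / lam"
  using lap_poly_eval[where E="compl_graph E", OF assms(2)] complement_charmatrix[of E, OF assms(1)]
  by simp

lemma poly_le_from_open_ray:
  fixes p q :: "real poly"
  assumes less: "\<And>lam. lam > a \<Longrightarrow> poly p lam \<le> poly q lam" and b: "b \<ge> a"
  shows "poly p b \<le> poly q b"
proof (cases "b > a")
  case False
  then have b_eq: "b = a" using b by simp
  have "((\<lambda>lam. poly q lam - poly p lam) \<longlongrightarrow> poly q a - poly p a) (at_right a)"
    by (intro tendsto_intros)
  moreover have "\<forall>\<^sub>F lam in at_right a. 0 \<le> poly q lam - poly p lam"
    using less by (intro eventually_at_rightI[of a "a + 1"]) auto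
  ultimately have "0 \<le> poly q a - poly p a" by (rule tendsto_lowerbound) simp
  then show ?thesis by (simp add: b_eq)
qed (rule less)

context star_pair
begin

lemma split_irrefl: "\<not> split_graph v v" and merged_irrefl: "\<not> merged_graph v v"
  using H_irrefl x_notin y_notin by (auto simp: add_star_def)

theorem lap_poly_complement_le:
  assumes "lam \<ge> real CARD('a)"
  shows "poly (lap_poly (compl_graph merged_graph)) lam \<le> poly (lap_poly (compl_graph split_graph)) lam"
proof (rule poly_le_from_open_ray[OF _ assms])
  fix lam :: real assume lam: "lam > real CARD('a)"
  moreover have "real CARD('a) > 0" by simp
  ultimately have "lam > 0" by linarith
  then show "poly (lap_poly (compl_graph merged_graph)) lam \<le> poly (lap_poly (compl_graph split_graph)) lam"
    using det_split_ge_merged[of "lam - real CARD('a)"] lam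
    by (simp add: lap_poly_complement split_irrefl merged_irrefl divide_right_mono)
qed

text \<open>The complements of the split and merged graphs form again a symmetric pair of
  stars, with the roles of x and y exchanged; the common part is the complement of H
  without the edges between {x,y} and A \<union> B.\<close>
definition compl_rest :: "'a \<Rightarrow> 'a \<Rightarrow> bool" where
  "compl_rest u v \<longleftrightarrow> u \<noteq> v \<and> \<not> H u v \<and>
     \<not> ((u = x \<or> u = y) \<and> v \<in> A \<union> B) \<and> \<not> ((v = x \<or> v = y) \<and> u \<in> A \<union> B)"

lemma complement_star_pair: "star_pair compl_rest \<alpha> y x A B"
proof
  show "compl_rest (\<alpha> u) (\<alpha> v) \<longleftrightarrow> compl_rest u v" for u v
    using \<alpha>_aut[of u v] \<alpha>_eq_x_iff \<alpha>_eq_y_iff \<alpha>_mem_iff \<alpha>_inj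
    by (auto simp: compl_rest_def inj_eq)
qed (use H_sym x_ne_y A_B_disjoint x_notin y_notin \<alpha>_bij \<alpha>_x \<alpha>_y \<alpha>_fix
    in \<open>auto simp: compl_rest_def\<close>)

lemma compl_split: "compl_graph split_graph = add_star (add_star compl_rest y A) x B"
  and compl_merged: "compl_graph merged_graph = add_star compl_rest x (A \<union> B)"
  using H_sym x_ne_y A_B_disjoint x_notin y_notin no_H_x no_H_y no_H_to_x no_H_to_y
  by (auto simp: fun_eq_iff compl_graph_def add_star_def compl_rest_def)

end

text \<open>A symmetric K_xy-operation is a star_pair: H is G without the edges from x to X
  and from y to Y, G is the split graph and the result is the merged graph.\<close>
lemma symmetric_Kxy_star_pair:
  fixes G :: "'a::finite \<Rightarrow> 'a \<Rightarrow> bool"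
  assumes G: "simple_graph G" and "x \<noteq> y" "x \<in> K" "y \<in> K" and sym: "symmetric_Kxy G K x y"
  obtains H \<alpha> X Y where "star_pair H \<alpha> x y X Y"
    "G = add_star (add_star H x X) y Y" "Kxy_op G K x y = add_star H y (X \<union> Y)"
proof -
  define X where "X = Xset G K x y"
  define Y where "Y = Xset G K y x"
  define H where "H = remove_xXyY G K x y"
  obtain \<alpha> where aut: "graph_automorphism H \<alpha>" and \<alpha>: "\<alpha> x = y" "\<alpha> y = x"
    and fixed: "\<forall>v\<in>X \<union> Y. \<alpha> v = v"
    using sym unfolding symmetric_Kxy_def H_def X_def Y_def by blast
  have G_sym: "\<And>u v. G u v \<Longrightarrow> G v u" and G_irrefl: "\<And>v. \<not> G v v"
    using G by (auto simp: simple_graph_def)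
  have X: "w \<in> X \<longleftrightarrow> G x w \<and> w \<notin> K \<and> \<not> G y w" for w by (auto simp: X_def Xset_def nbhd_def)
  have Y: "w \<in> Y \<longleftrightarrow> G y w \<and> w \<notin> K \<and> \<not> G x w" for w by (auto simp: Y_def Xset_def nbhd_def)
  have H_def': "H u v \<longleftrightarrow> G u v \<and> \<not> (\<exists>w\<in>X. {u, v} = {x, w}) \<and> \<not> (\<exists>w\<in>Y. {u, v} = {y, w})"
    for u v by (simp add: H_def remove_xXyY_def X_def Y_def)
  have H: "H u v \<longleftrightarrow> G u v \<and> \<not> (u = x \<and> v \<in> X) \<and> \<not> (v = x \<and> u \<in> X)
      \<and> \<not> (u = y \<and> v \<in> Y) \<and> \<not> (v = y \<and> u \<in> Y)" for u v
    unfolding H_def' by (auto simp: doubleton_eq_iff)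
  have xy_notin: "x \<notin> X \<union> Y" "y \<notin> X \<union> Y" and XY: "X \<inter> Y = {}"
    using assms(3,4) X Y by auto
  have "star_pair H \<alpha> x y X Y"
  proof
    show "H u v \<Longrightarrow> H v u" for u v using G_sym unfolding H by blast
    show "\<not> H v v" for v using G_irrefl unfolding H by blast
    show "bij \<alpha>" "H (\<alpha> u) (\<alpha> v) \<longleftrightarrow> H u v" for u v
      using aut by (simp_all add: graph_automorphism_def)
  qed (use assms(2) \<alpha> XY xy_notin fixed X Y H in auto)
  moreover have "G = add_star (add_star H x X) y Y"
    using G_sym X Y by (intro ext) (auto simp: add_star_def H)
  moreover have "Kxy_op G K x y = add_star H y (X \<union> Y)"
  proof (intro ext)
    fix u v
    have "Kxy_op G K x y u v \<longleftrightarrow> (G u v \<and> \<not> (u = x \<and> v \<in> X) \<and> \<not> (v = x \<and> u \<in> X))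
        \<or> (u = y \<and> v \<in> X) \<or> (v = y \<and> u \<in> X)"
      using assms(2-4) X by (auto simp: Kxy_op_def X_def[symmetric] doubleton_eq_iff)
    then show "Kxy_op G K x y u v = add_star H y (X \<union> Y) u v"
      using G_sym X Y assms(2-4) by (auto simp: add_star_def H)
  qed
  ultimately show ?thesis by (rule that)
qed

theorem mainTheorem4:
  fixes G :: "'a::finite \<Rightarrow> 'a \<Rightarrow> bool" and K :: "'a set" and x y :: 'a
  assumes "simple_graph G" and "x \<noteq> y" and "x \<in> K" and "y \<in> K"
    and "symmetric_Kxy G K x y"
  shows "num_spanning_trees G \<ge> num_spanning_trees (Kxy_op G K x y)
    \<and> num_spanning_trees (compl_graph G) \<ge> num_spanning_trees (compl_graph (Kxy_op G K x y))
    \<and> (\<forall>lam::real. lam \<ge> real CARD('a) \<longrightarrow>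
         poly (lap_poly (compl_graph G)) lam \<ge> poly (lap_poly (compl_graph (Kxy_op G K x y))) lam)"
proof -
  obtain H \<alpha> X Y where pair: "star_pair H \<alpha> x y X Y"
    and G: "G = add_star (add_star H x X) y Y" and F: "Kxy_op G K x y = add_star H y (X \<union> Y)"
    using symmetric_Kxy_star_pair[OF assms] by blast
  interpret star_pair H \<alpha> x y X Y by (rule pair)
  interpret complement: star_pair compl_rest \<alpha> y x X Y by (rule complement_star_pair)
  show ?thesis
    unfolding F using spanning_trees_le complement.spanning_trees_le lap_poly_complement_le
    by (simp add: G compl_split compl_merged)
qed

end
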